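(* Let $n\ge2$, $\sigma\ge2$, and let $s$ be a random string of length $n$ with characters i.i.d. uniform over an alphabet of size $\sigma$; let $k$ be the number of tokens of $\mathcal{F}(s)$. Put $p=(\sigma-1)/\sigma$, $m=n-1$, $q=(2-\sigma)/\sigma$. Then \[\mathrm{Var}[k]=\frac{mp(1-p)}{4}-\frac{mp(1-p)\,q^{m-1}}{2}+\frac{1-q^{2m}}{16}.\] In particular $\mathrm{Var}[k]=0$ when $n=2$, and $\mathrm{Var}[k]-(n-1)(\sigma-1)/(4\sigma^2)$ is bounded independently of $n$.
   Context: Let $\texttt{@},\texttt{\$}$ be two distinct symbols not in the alphabet. For a string $s$ of length $n$ let $\hat s=\texttt{@}\,s\,\texttt{\$}$ (positions $1,\dots,n+2$); $\hat s[i..j)$ is the substring at positions $i,\dots,j-1$. The leading (trailing) run of a non-empty string is its longest prefix (suffix) consisting of one repeated symbol. The Flashback decomposition $\mathcal{F}(s)$ is the sequence of tokens (pairs $(\sigma,p)$) produced as follows, starting from active span $[lo,hi)=[1,n+3)$: if $lo\ge hi$, stop. Let $\ell$ be the leading-run length of $\hat s[lo..hi)$. If $\ell=hi-lo$, append $(\hat s[lo..hi),0)$ and stop. Otherwise let $\hat s[r..hi)$ be the trailing run of $\hat s[lo..hi)$ and $\sigma=\hat s[lo..lo+\ell)\cdot\hat s[r..hi)$; if $lo+\ell\ge r$, append $(\sigma,0)$ and stop; otherwise append $(\sigma,\ell)$ and repeat with $[lo+\ell,r)$. *)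

theory Defs
  imports "HOL-Probability.Probability"
begin

text \<open>Extended alphabet: the two sentinel symbols @ and $ together with the
  ordinary characters (natural numbers; a string over an alphabet of size
  sz is a list with entries in {..<sz}).\<close>
datatype sym = At | Dollar | Ch nat

definition hat :: "nat list \<Rightarrow> sym list" where
  "hat s = At # map Ch s @ [Dollar]"

definition lead_run :: "'a list \<Rightarrow> nat" where
  "lead_run w = length (takeWhile (\<lambda>c. c = hd w) w)"

definition trail_run :: "'a list \<Rightarrow> nat" where
  "trail_run w = lead_run (rev w)"

lemma lead_run_pos: "w \<noteq> [] \<Longrightarrow> lead_run w \<ge> 1"
  by (cases w) (auto simp: lead_run_def)

function flash :: "'a list \<Rightarrow> ('a list \<times> nat) list" where
  "flash w =
    (if w = [] then []
     else let l = lead_run w in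
       if l = length w then [(w, 0)]
       else let t = trail_run w;
                sg = take l w @ drop (length w - t) w in
         if l \<ge> length w - t then [(sg, 0)]
         else (sg, l) # flash (drop l (take (length w - t) w)))"
  by pat_completeness auto
termination
  apply (relation "Wellfounded.measure length")
   apply simp
  apply (simp add: Let_def)
  apply (drule lead_run_pos)
  apply simp
  done

definition flashback :: "nat list \<Rightarrow> (sym list \<times> nat) list" where
  "flashback s = flash (hat s)"

definition ntok :: "nat list \<Rightarrow> nat" where
  "ntok s = length (flashback s)"

definition strings :: "nat \<Rightarrow> nat \<Rightarrow> nat list set" where
  "strings sz n = {s. length s = n \<and> set s \<subseteq> {..<sz}}"

definition var_k :: "nat \<Rightarrow> nat \<Rightarrow> real" where
  "var_k sz n =
     measure_pmf.variance (pmf_of_set (strings sz n)) (\<lambda>s. real (ntok s))"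

end

theory Submission
  imports Defs
begin

text \<open>
  Each step of the Flashback decomposition strips the leading and the trailing run of the
  active span, so it removes exactly two run boundaries; the sentinels add two boundaries to
  those of \<open>s\<close>. Hence the number of tokens is \<open>k = 2 + \<lfloor>D/2\<rfloor>\<close>, where \<open>D\<close> counts
  the positions \<open>i\<close> with \<open>s\<^sub>i \<noteq> s\<^sub>i\<^sub>+\<^sub>1\<close>. For a uniform random string these \<open>m = n - 1\<close>
  events are independent with probability \<open>p\<close>, so \<open>D\<close> is binomially distributed. Writing
  \<open>\<lfloor>D/2\<rfloor> = D/2 - 1/4 + (-1)\<^sup>D/4\<close>, the variance is a combination of the binomial moments
  \<open>E D = mp\<close>, \<open>E D\<^sup>2 = mp(1-p) + (mp)\<^sup>2\<close>, \<open>E (-1)\<^sup>D = q\<^sup>m\<close> and \<open>E D(-1)\<^sup>D = -mpq\<^sup>m\<^sup>-\<^sup>1\<close>,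
  all of which follow from the recursion \<open>Bin(m+1,p) = Bin(m,p) + Bernoulli(p)\<close>.
\<close>

lemma real_div_2_eq: "real (k div 2) = real k / 2 - 1 / 4 + (-1) ^ k / 4"
  by (cases "even k") (auto elim!: evenE oddE simp: field_simps)

lemma expectation_binomial_pmf_Suc:
  fixes g :: "nat \<Rightarrow> real"
  assumes p: "p \<in> {0..1}"
  shows "measure_pmf.expectation (binomial_pmf (Suc n) p) g =
           (1 - p) * measure_pmf.expectation (binomial_pmf n p) g
           + p * measure_pmf.expectation (binomial_pmf n p) (\<lambda>k. g (Suc k))"
proof -
  have shift: "binomial_pmf n p \<bind> (\<lambda>k. return_pmf ((if b then 1 else 0) + k)) =
                 map_pmf (\<lambda>k. (if b then 1 else 0) + k) (binomial_pmf n p)" for b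
    by (simp add: map_pmf_def)
  have "measure_pmf.expectation (binomial_pmf (Suc n) p) g =
          (\<Sum>b\<in>UNIV. pmf (bernoulli_pmf p) b *
             measure_pmf.expectation (map_pmf (\<lambda>k. (if b then 1 else 0) + k) (binomial_pmf n p)) g)"
    unfolding binomial_pmf_Suc [OF p] shift
    by (subst pmf_expectation_bind [where A = UNIV])
       (use p in \<open>auto intro!: finite_imageI finite_set_pmf_binomial_pmf\<close>)
  then show ?thesis
    using p by (simp add: UNIV_bool)
qed

context
  fixes p :: real
  assumes p: "p \<in> {0..1}"
begin

lemma expectation_binomial_pmf_real: "measure_pmf.expectation (binomial_pmf n p) real = n * p"
proof (induction n)
  case (Suc n)
  then show ?case
    using p by (simp add: expectation_binomial_pmf_Suc algebra_simps)
qed (use p in \<open>simp add: binomial_pmf_0\<close>)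

lemma expectation_binomial_pmf_square:
  "measure_pmf.expectation (binomial_pmf n p) (\<lambda>k. real k ^ 2) = n * p * (1 - p) + (n * p) ^ 2"
proof (induction n)
  case (Suc n)
  then show ?case
    using p by (simp add: expectation_binomial_pmf_Suc expectation_binomial_pmf_real
        power2_eq_square algebra_simps)
qed (use p in \<open>simp add: binomial_pmf_0\<close>)

lemma expectation_binomial_pmf_neg_one_power:
  "measure_pmf.expectation (binomial_pmf n p) (\<lambda>k. (-1) ^ k) = (1 - 2 * p) ^ n"
proof (induction n)
  case (Suc n)
  then show ?case
    using p by (simp add: expectation_binomial_pmf_Suc algebra_simps)
qed (use p in \<open>simp add: binomial_pmf_0\<close>)

lemma expectation_binomial_pmf_real_neg_one_power:
  "measure_pmf.expectation (binomial_pmf n p) (\<lambda>k. real k * (-1) ^ k) = - n * p * (1 - 2 * p) ^ (n - 1)"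
proof (induction n)
  case (Suc n)
  have "measure_pmf.expectation (binomial_pmf (Suc n) p) (\<lambda>k. real k * (-1) ^ k) =
          (1 - 2 * p) * (- n * p * (1 - 2 * p) ^ (n - 1)) - p * (1 - 2 * p) ^ n"
    unfolding expectation_binomial_pmf_Suc [OF p]
    using p by (simp add: Suc.IH expectation_binomial_pmf_neg_one_power algebra_simps)
  then show ?case
    by (cases n) (simp_all add: algebra_simps)
qed (use p in \<open>simp add: binomial_pmf_0\<close>)

lemma variance_binomial_pmf_div_2:
  "measure_pmf.variance (binomial_pmf n p) (\<lambda>k. real (k div 2)) =
     n * p * (1 - p) / 4 - n * p * (1 - p) * (1 - 2 * p) ^ (n - 1) / 2
     + (1 - (1 - 2 * p) ^ (2 * n)) / 16"
proof -
  define q where "q = 1 - 2 * p"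
  have sq: "(real k / 2 - 1 / 4 + (-1) ^ k / 4) ^ 2 =
              real k ^ 2 / 4 - real k / 4 + 1 / 8 + real k * (-1) ^ k / 4 - (-1) ^ k / 8" for k
    by (simp add: power2_eq_square field_simps flip: power_add)
  have mean: "measure_pmf.expectation (binomial_pmf n p) (\<lambda>k. real (k div 2)) =
                n * p / 2 - 1 / 4 + q ^ n / 4"
    using p by (simp add: real_div_2_eq expectation_binomial_pmf_real
        expectation_binomial_pmf_neg_one_power q_def)
  have second: "measure_pmf.expectation (binomial_pmf n p) (\<lambda>k. real (k div 2) ^ 2) =
                  (n * p * (1 - p) + (n * p) ^ 2) / 4 - n * p / 4 + 1 / 8
                  - n * p * q ^ (n - 1) / 4 - q ^ n / 8"
    using p by (simp add: real_div_2_eq sq expectation_binomial_pmf_real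
        expectation_binomial_pmf_square expectation_binomial_pmf_neg_one_power
        expectation_binomial_pmf_real_neg_one_power q_def)
  have "measure_pmf.variance (binomial_pmf n p) (\<lambda>k. real (k div 2)) =
          (n * p * (1 - p) + (n * p) ^ 2) / 4 - n * p / 4 + 1 / 8
          - n * p * q ^ (n - 1) / 4 - q ^ n / 8 - (n * p / 2 - 1 / 4 + q ^ n / 4) ^ 2"
    using p by (subst measure_pmf.variance_eq) (simp_all add: mean second)
  also have "\<dots> = n * p * (1 - p) / 4 - n * p * (1 - p) * q ^ (n - 1) / 2 + (1 - q ^ (2 * n)) / 16"
    by (cases n) (simp_all add: q_def power_mult power2_eq_square field_simps)
  finally show ?thesis by (simp add: q_def)
qed

end

declare flash.simps [simp del]

fun changes :: "'a list \<Rightarrow> nat" where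
  "changes (x # y # zs) = (if x = y then 0 else 1) + changes (y # zs)"
| "changes _ = 0"

lemma changes_Cons:
  "changes (x # ys) = changes ys + (if ys \<noteq> [] \<and> x \<noteq> hd ys then 1 else 0)"
  by (cases ys) auto

lemma changes_append:
  "changes (xs @ ys) =
     changes xs + changes ys + (if xs \<noteq> [] \<and> ys \<noteq> [] \<and> last xs \<noteq> hd ys then 1 else 0)"
  by (induction xs rule: changes.induct) (auto simp: changes_Cons)

lemma changes_replicate [simp]: "changes (replicate k a) = 0"
proof (induction k)
  case (Suc k)
  then show ?case by (cases k) (auto simp: changes_Cons)
qed simp

lemma changes_map_inj: "inj f \<Longrightarrow> changes (map f xs) = changes xs"
  by (induction xs rule: changes.induct) (auto dest: injD)

lemma take_lead_run: "take (lead_run w) w = replicate (lead_run w) (hd w)"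
proof -
  have "takeWhile (\<lambda>c. c = hd w) w = take (lead_run w) w"
    unfolding lead_run_def by (rule takeWhile_eq_take)
  moreover have "takeWhile (\<lambda>c. c = hd w) w = replicate (lead_run w) (hd w)"
    unfolding lead_run_def by (rule replicate_length_same [symmetric]) (auto dest: set_takeWhileD)
  ultimately show ?thesis by simp
qed

lemma nth_lead_run_neq_hd: "lead_run w < length w \<Longrightarrow> w ! lead_run w \<noteq> hd w"
  unfolding lead_run_def using nth_length_takeWhile by fastforce

lemma drop_trail_run:
  "w \<noteq> [] \<Longrightarrow> drop (length w - trail_run w) w = replicate (trail_run w) (last w)"
  using take_lead_run [of "rev w"]
  by (metis hd_rev length_rev rev_replicate rev_rev_ident rev_take trail_run_def)

lemma trail_run_pos: "w \<noteq> [] \<Longrightarrow> trail_run w \<ge> 1"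
  unfolding trail_run_def using lead_run_pos [of "rev w"] by simp

lemma nth_before_trail_run_neq_last:
  assumes "trail_run w < length w"
  shows "w ! (length w - Suc (trail_run w)) \<noteq> last w"
  using nth_lead_run_neq_hd [of "rev w"] assms
  by (auto simp: trail_run_def rev_nth hd_rev)

lemma changes_eq_0_if_lead_run_eq_length: "lead_run w = length w \<Longrightarrow> changes w = 0"
  using take_lead_run [of w] by (metis changes_replicate take_all_iff order_refl)

lemma changes_le_1_if_runs_overlap:
  assumes "w \<noteq> []" and "length w - trail_run w \<le> lead_run w"
  shows "changes w \<le> 1"
proof -
  have "drop (lead_run w) w =
          drop (lead_run w - (length w - trail_run w)) (drop (length w - trail_run w) w)"
    using assms(2) by simp
  then have "changes (drop (lead_run w) w) = 0"
    by (simp add: drop_trail_run [OF assms(1)])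
  then show ?thesis
    using changes_append [of "take (lead_run w) w" "drop (lead_run w) w"]
    unfolding append_take_drop_id by (simp add: take_lead_run)
qed

lemma changes_eq_inner_plus_2:
  assumes "w \<noteq> []" and "lead_run w < length w - trail_run w"
  shows "changes w = changes (drop (lead_run w) (take (length w - trail_run w) w)) + 2"
proof -
  define l t where "l = lead_run w" and "t = trail_run w"
  define inner where "inner = drop l (take (length w - t) w)"
  have lt: "l < length w - t" using assms(2) by (simp add: l_def t_def)
  have w: "w = replicate l (hd w) @ inner @ replicate t (last w)"
    using lt take_lead_run [of w] drop_trail_run [OF assms(1)]
    unfolding inner_def l_def [symmetric] t_def [symmetric]
    by (metis append_take_drop_id append.assoc min_absorb1 nless_le take_take)
  have "inner \<noteq> []" using lt by (simp add: inner_def)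
  moreover have "hd inner \<noteq> hd w"
    using lt nth_lead_run_neq_hd [of w] by (simp add: inner_def l_def hd_drop_conv_nth)
  moreover have "last inner \<noteq> last w"
    using lt nth_before_trail_run_neq_last [of w]
    by (simp add: inner_def t_def last_conv_nth)
  moreover have "l \<ge> 1" "t \<ge> 1"
    using lead_run_pos trail_run_pos assms(1) by (auto simp: l_def t_def)
  ultimately have "changes w = changes inner + 2"
    by (subst w) (auto simp: changes_append)
  then show ?thesis by (simp add: inner_def l_def t_def)
qed

lemma length_flash: "w \<noteq> [] \<Longrightarrow> length (flash w) = (changes w + 2) div 2"
proof (induction w rule: flash.induct)
  case (1 w)
  consider "lead_run w = length w"
    | "lead_run w \<noteq> length w" "length w - trail_run w \<le> lead_run w"
    | "lead_run w < length w - trail_run w"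
    by linarith
  then show ?case
  proof cases
    case 1
    then show ?thesis
      using "1.prems" by (subst flash.simps) (simp add: changes_eq_0_if_lead_run_eq_length)
  next
    case 2
    then show ?thesis
      using "1.prems" changes_le_1_if_runs_overlap [of w]
      by (subst flash.simps) (simp add: Let_def)
  next
    case 3
    then show ?thesis
      using "1.prems" "1.IH" [OF "1.prems" refl _ refl refl] changes_eq_inner_plus_2 [of w]
      by (subst flash.simps) (simp add: Let_def)
  qed
qed

lemma changes_hat: "s \<noteq> [] \<Longrightarrow> changes (hat s) = changes s + 2"
  using changes_map_inj [of Ch s]
  by (simp add: hat_def changes_Cons changes_append inj_def hd_map last_map)

lemma ntok_eq:
  assumes "s \<noteq> []"
  shows "ntok s = 2 + changes s div 2"
proof -
  have "hat s \<noteq> []" by (simp add: hat_def)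
  then show ?thesis
    using assms by (simp add: ntok_def flashback_def length_flash changes_hat)
qed

lemma pmf_of_set_Times:
  assumes "finite A" "A \<noteq> {}" "finite B" "B \<noteq> {}"
  shows "pmf_of_set (A \<times> B) = pair_pmf (pmf_of_set A) (pmf_of_set B)"
proof (rule pmf_eqI)
  fix x :: "'a \<times> 'b"
  show "pmf (pmf_of_set (A \<times> B)) x = pmf (pair_pmf (pmf_of_set A) (pmf_of_set B)) x"
    using assms by (cases x) (simp add: pmf_pair card_cartesian_product indicator_def)
qed

lemma strings_Suc: "strings sz (Suc n) = (\<lambda>(c, s). c # s) ` ({..<sz} \<times> strings sz n)"
  by (auto simp: strings_def length_Suc_conv image_iff)

lemma finite_strings: "finite (strings sz n)"
  unfolding strings_def using finite_lists_length_eq [of "{..<sz}" n] by (simp add: conj_commute)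

lemma card_strings: "card (strings sz n) = sz ^ n"
  unfolding strings_def using card_lists_length_eq [of "{..<sz}" n] by (simp add: conj_commute)

lemma strings_nonempty: "sz > 0 \<Longrightarrow> strings sz n \<noteq> {}"
  using card_strings [of sz n] by auto

lemma pmf_of_strings_Suc:
  assumes "sz > 0"
  shows "pmf_of_set (strings sz (Suc n)) =
           map_pmf (\<lambda>(c, s). c # s) (pair_pmf (pmf_of_set {..<sz}) (pmf_of_set (strings sz n)))"
proof -
  have "map_pmf (\<lambda>(c, s). c # s) (pmf_of_set ({..<sz} \<times> strings sz n)) =
          pmf_of_set (strings sz (Suc n))"
    unfolding strings_Suc using assms
    by (intro map_pmf_of_set_inj) (auto simp: inj_on_def finite_strings strings_nonempty)
  moreover have "pmf_of_set ({..<sz} \<times> strings sz n) =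
                   pair_pmf (pmf_of_set {..<sz}) (pmf_of_set (strings sz n))"
    using assms by (intro pmf_of_set_Times) (auto simp: finite_strings strings_nonempty)
  ultimately show ?thesis by simp
qed

lemma map_pmf_neq_uniform:
  assumes "h < sz"
  shows "map_pmf (\<lambda>c. c \<noteq> h) (pmf_of_set {..<sz}) = bernoulli_pmf ((real sz - 1) / real sz)"
proof (rule pmf_eqI)
  fix b :: bool
  have "{..<sz} \<noteq> {}" using assms by auto
  then have "pmf (map_pmf (\<lambda>c. c \<noteq> h) (pmf_of_set {..<sz})) b
               = card ({..<sz} \<inter> (\<lambda>c. c \<noteq> h) -` {b}) / sz"
    by (simp add: pmf_map measure_pmf_of_set)
  moreover have "{..<sz} \<inter> (\<lambda>c. c \<noteq> h) -` {True} = {..<sz} - {h}"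
    and "{..<sz} \<inter> (\<lambda>c. c \<noteq> h) -` {False} = {h}"
    using assms by auto
  ultimately show "pmf (map_pmf (\<lambda>c. c \<noteq> h) (pmf_of_set {..<sz})) b =
             pmf (bernoulli_pmf ((real sz - 1) / real sz)) b"
    using assms by (cases b) (simp_all add: of_nat_diff divide_simps)
qed

lemma map_pmf_changes_pmf_of_strings:
  assumes "sz > 0"
  shows "map_pmf changes (pmf_of_set (strings sz (Suc n))) = binomial_pmf n ((real sz - 1) / real sz)"
proof -
  define p where "p = (real sz - 1) / real sz"
  have p: "p \<in> {0..1}" using assms by (simp add: p_def)
  define C where "C = pmf_of_set {..<sz}"
  show ?thesis
    unfolding p_def [symmetric]
  proof (induction n)
    case 0
    have "changes s = 0" if "s \<in> strings sz 1" for s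
      using that by (auto simp: strings_def length_Suc_conv)
    then have "map_pmf changes (pmf_of_set (strings sz 1)) =
                 map_pmf (\<lambda>_. 0) (pmf_of_set (strings sz 1))"
      using assms by (intro map_pmf_cong) (auto simp: finite_strings strings_nonempty)
    then show ?case using p by (simp add: binomial_pmf_0)
  next
    case (Suc n)
    define U where "U = pmf_of_set (strings sz (Suc n))"
    have "map_pmf changes (pmf_of_set (strings sz (Suc (Suc n)))) =
            C \<bind> (\<lambda>c. U \<bind> (\<lambda>s. return_pmf (changes (c # s))))"
      by (simp add: pmf_of_strings_Suc [OF assms] C_def U_def pair_pmf_def map_bind_pmf)
    also have "\<dots> = U \<bind> (\<lambda>s. C \<bind> (\<lambda>c. return_pmf (changes (c # s))))"
      by (rule bind_commute_pmf)
    also have "\<dots> = U \<bind> (\<lambda>s. bernoulli_pmf p \<bind>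
                        (\<lambda>b. return_pmf ((if b then 1 else 0) + changes s)))"
    proof (rule bind_pmf_cong [OF refl])
      fix s assume "s \<in> set_pmf U"
      then have "s \<in> strings sz (Suc n)"
        using assms by (simp add: U_def finite_strings strings_nonempty)
      then have "s \<noteq> []" "hd s < sz"
        by (auto simp: strings_def length_Suc_conv)
      then have "C \<bind> (\<lambda>c. return_pmf (changes (c # s))) =
                 map_pmf (\<lambda>c. c \<noteq> hd s) C \<bind>
                   (\<lambda>b. return_pmf ((if b then 1 else 0) + changes s))"
        by (simp add: bind_map_pmf changes_Cons add.commute)
      then show "C \<bind> (\<lambda>c. return_pmf (changes (c # s))) =
                 bernoulli_pmf p \<bind> (\<lambda>b. return_pmf ((if b then 1 else 0) + changes s))"
        using map_pmf_neq_uniform [of "hd s" sz] \<open>hd s < sz\<close> by (simp add: C_def p_def)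
    qed
    also have "\<dots> = bernoulli_pmf p \<bind>
                        (\<lambda>b. map_pmf changes U \<bind> (\<lambda>k. return_pmf ((if b then 1 else 0) + k)))"
      by (simp add: bind_commute_pmf [of U] bind_map_pmf)
    also have "\<dots> = binomial_pmf (Suc n) p"
      using Suc.IH p by (simp add: U_def binomial_pmf_Suc)
    finally show ?case .
  qed
qed

lemma var_k_Suc:
  assumes "sz > 0"
  defines "p \<equiv> (real sz - 1) / real sz"
  shows "var_k sz (Suc m) =
           m * p * (1 - p) / 4 - m * p * (1 - p) * (1 - 2 * p) ^ (m - 1) / 2
           + (1 - (1 - 2 * p) ^ (2 * m)) / 16"
proof -
  define U where "U = pmf_of_set (strings sz (Suc m))"
  have p: "p \<in> {0..1}" using assms by (simp add: p_def)
  have "set_pmf U = strings sz (Suc m)"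
    using assms by (simp add: U_def finite_strings strings_nonempty)
  then have "ntok s = 2 + changes s div 2" if "s \<in> set_pmf U" for s
    using that by (intro ntok_eq) (auto simp: strings_def)
  then have "map_pmf ntok U = map_pmf (\<lambda>s. 2 + changes s div 2) U"
    by (rule map_pmf_cong [OF refl])
  also have "\<dots> = map_pmf (\<lambda>k. 2 + k div 2) (map_pmf changes U)"
    by (simp add: map_pmf_comp)
  also have "\<dots> = map_pmf (\<lambda>k. 2 + k div 2) (binomial_pmf m p)"
    unfolding U_def p_def by (simp only: map_pmf_changes_pmf_of_strings [OF assms(1)])
  finally have distr: "map_pmf ntok U = map_pmf (\<lambda>k. 2 + k div 2) (binomial_pmf m p)" .
  have "var_k sz (Suc m) = measure_pmf.variance (map_pmf ntok U) real"
    by (simp add: var_k_def U_def)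
  also have "\<dots> = measure_pmf.variance (binomial_pmf m p) (\<lambda>k. 2 + real (k div 2))"
    unfolding distr by simp
  also have "\<dots> = measure_pmf.variance (binomial_pmf m p) (\<lambda>k. real (k div 2))"
    using p by simp
  finally show ?thesis
    using p by (simp add: variance_binomial_pmf_div_2)
qed

lemma mult_power_one_minus_le:
  fixes r :: real
  assumes "0 \<le> r" "r \<le> 1"
  shows "real n * r ^ (n - 1) * (1 - r) \<le> 1 - r ^ n"
proof -
  have "real n * r ^ (n - 1) = (\<Sum>i<n. r ^ (n - 1))" by simp
  also have "\<dots> \<le> (\<Sum>i<n. r ^ i)"
    by (rule sum_mono) (use assms in \<open>auto intro: power_decreasing\<close>)
  finally have "real n * r ^ (n - 1) * (1 - r) \<le> (\<Sum>i<n. r ^ i) * (1 - r)"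
    using assms by (simp add: mult_right_mono)
  also have "\<dots> = 1 - r ^ n"
    using one_diff_power_eq [of r n] by (simp add: mult.commute)
  finally show ?thesis .
qed

lemma var_k_Suc_deviation:
  assumes "sz \<ge> 2"
  shows "\<bar>var_k sz (Suc m) - m * (real sz - 1) / (4 * real sz ^ 2)\<bar> \<le> 5 / 16"
proof -
  define p where "p = (real sz - 1) / real sz"
  define r where "r = \<bar>1 - 2 * p\<bar>"
  have r: "r = 1 - 2 / sz" "0 \<le> r" "r \<le> 1"
    using assms by (auto simp: r_def p_def abs_if field_simps)
  have pq: "p * (1 - p) = (real sz - 1) / real sz ^ 2"
    using assms by (simp add: p_def power2_eq_square field_simps)
  have "0 \<le> p" "p \<le> 1" using assms by (auto simp: p_def)
  then have "\<bar>m * p * (1 - p) * (1 - 2 * p) ^ (m - 1)\<bar> = m * (p * (1 - p)) * r ^ (m - 1)"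
    by (simp add: abs_mult power_abs r_def)
  also have "\<dots> \<le> m * ((1 - r) / 2) * r ^ (m - 1)"
  proof -
    have "p * (1 - p) \<le> (1 - r) / 2"
      using assms unfolding pq r(1) by (simp add: power2_eq_square field_simps)
    then show ?thesis using r(2) by (intro mult_right_mono mult_left_mono) auto
  qed
  also have "\<dots> \<le> 1 / 2"
    using mult_power_one_minus_le [OF r(2,3), of m] zero_le_power [OF r(2), of m]
    by (simp add: mult.commute mult.left_commute)
  finally have first: "\<bar>m * p * (1 - p) * (1 - 2 * p) ^ (m - 1)\<bar> \<le> 1 / 2" .
  have second: "\<bar>1 - (1 - 2 * p) ^ (2 * m)\<bar> \<le> 1"
  proof -
    have "(1 - 2 * p) ^ (2 * m) = r ^ (2 * m)"
      unfolding r_def by (simp add: power_even_abs)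
    then show ?thesis using r(2,3) power_le_one [OF r(2,3), of "2 * m"] by simp
  qed
  have deviation: "var_k sz (Suc m) - m * (real sz - 1) / (4 * real sz ^ 2) =
                   - (m * p * (1 - p) * (1 - 2 * p) ^ (m - 1)) / 2 + (1 - (1 - 2 * p) ^ (2 * m)) / 16"
  proof -
    have "m * (real sz - 1) / (4 * real sz ^ 2) = m * p * (1 - p) / 4"
      by (simp add: mult.assoc pq)
    moreover have "var_k sz (Suc m) =
        m * p * (1 - p) / 4 - m * p * (1 - p) * (1 - 2 * p) ^ (m - 1) / 2
        + (1 - (1 - 2 * p) ^ (2 * m)) / 16"
      using var_k_Suc [of sz m] assms unfolding p_def by simp
    ultimately show ?thesis by linarith
  qed
  have "\<bar>- a / 2 + b / 16\<bar> \<le> 5 / 16" if "\<bar>a\<bar> \<le> 1 / 2" "\<bar>b\<bar> \<le> 1" for a b :: real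
    using that by linarith
  then show ?thesis
    unfolding deviation using first second .
qed

theorem corollaryA1:
  fixes sz :: nat
  assumes "sz \<ge> 2"
  shows "(\<forall>n \<ge> 2.
            (let p = (real sz - 1) / real sz;
                 m = real n - 1;
                 q = (2 - real sz) / real sz
             in var_k sz n =
                  m * p * (1 - p) / 4 - m * p * (1 - p) * q ^ (n - 2) / 2
                  + (1 - q ^ (2 * (n - 1))) / 16))
         \<and> var_k sz 2 = 0
         \<and> (\<exists>C. \<forall>n \<ge> 2.
               \<bar>var_k sz n - real (n - 1) * (real sz - 1) / (4 * real sz ^ 2)\<bar> \<le> C)"
proof -
  define p where "p = (real sz - 1) / real sz"
  define q where "q = (2 - real sz) / real sz"
  have q: "q = 1 - 2 * p"
    using assms by (simp add: p_def q_def field_simps)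
  have formula: "var_k sz n = (real n - 1) * p * (1 - p) / 4
      - (real n - 1) * p * (1 - p) * q ^ (n - 2) / 2 + (1 - q ^ (2 * (n - 1))) / 16"
    if "n \<ge> 2" for n
    using var_k_Suc [of sz "n - 1"] that assms
    by (simp add: p_def [symmetric] q of_nat_diff numeral_2_eq_2)
  have "var_k sz 2 = 0"
    using formula [of 2] by (simp add: q power2_eq_square field_simps)
  moreover have "\<bar>var_k sz n - real (n - 1) * (real sz - 1) / (4 * real sz ^ 2)\<bar> \<le> 5 / 16"
    if "n \<ge> 2" for n
    using var_k_Suc_deviation [OF assms, of "n - 1"] that by simp
  ultimately show ?thesis
    using formula unfolding Let_def p_def q_def by blast
qed

end
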